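(* Let $(X,\mu)$ be a non-atomic probability space equipped with a tree $\mathcal T$, let $M_{\mathcal T}$ be the associated dyadic maximal operator, and let $p>1$. Let $\phi:X\to[0,+\infty)$ satisfy $\int_X\phi\,d\mu=f$ and $\int_X\phi^p\,d\mu=F$ where $0<f^p\leq F$, and let $K\subseteq X$ be measurable with $\mu(K)=k$, where $k\in(0,1]$. Then \[ \int_K(M_{\mathcal T}\phi)^p\,d\mu\leq\int_0^k[\phi^\star(u)]^p\,du\cdot\omega_p\!\left(\frac{\left(\int_0^k\phi^\star(u)\,du\right)^p}{k^{p-1}\int_0^k[\phi^\star(u)]^p\,du}\right)^p. \]
   Context: A tree on a non-atomic probability space $(X,\mu)$ is a family $\mathcal T$ of measurable subsets of $X$ such that: (i) $X\in\mathcal T$ and $\mu(I)>0$ for every $I\in\mathcal T$; (ii) for every $I\in\mathcal T$ there is a finite or countable subset $C(I)\subseteq\mathcal T$ with at least two elements, whose elements are pairwise disjoint subsets of $I$ with union $I$; (iii) $\mathcal T=\bigcup_{m\geq0}\mathcal T_{(m)}$, where $\mathcal T_{(0)}=\{X\}$ and $\mathcal T_{(m+1)}=\bigcup_{I\in\mathcal T_{(m)}}C(I)$; (iv) $\lim_{m\to\infty}\sup_{I\in\mathcal T_{(m)}}\mu(I)=0$; (v) $\mathcal T$ differentiates $L^1(X,\mu)$. The dyadic maximal operator is $M_{\mathcal T}\phi(x)=\sup\{\frac{1}{\mu(I)}\int_I|\phi|\,d\mu: x\in I\in\mathcal T\}$. $\phi^\star:(0,1]\to[0,+\infty)$ is the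 non-increasing, left-continuous rearrangement of $\phi$ (equimeasurable with $\phi$). $\omega_p:[0,1]\to[1,\frac{p}{p-1}]$ is the inverse of the function $H_p(z)=pz^{p-1}-(p-1)z^p$ restricted to $[1,\frac{p}{p-1}]$. *)

theory Defs
  imports "HOL-Probability.Probability"
begin

definition non_atomic :: "'a measure \<Rightarrow> bool" where
  "non_atomic M \<longleftrightarrow> (\<forall>A\<in>sets M. measure M A > 0 \<longrightarrow>
      (\<exists>B\<in>sets M. B \<subseteq> A \<and> 0 < measure M B \<and> measure M B < measure M A))"

fun tree_level :: "('a set \<Rightarrow> 'a set set) \<Rightarrow> 'a set \<Rightarrow> nat \<Rightarrow> 'a set set" where
  "tree_level C X 0 = {X}"
| "tree_level C X (Suc m) = \<Union> (C ` tree_level C X m)"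

definition avg :: "'a measure \<Rightarrow> 'a set \<Rightarrow> ('a \<Rightarrow> real) \<Rightarrow> real" where
  "avg M I \<phi> = (1 / measure M I) * (\<integral>y\<in>I. \<bar>\<phi> y\<bar> \<partial>M)"

definition differentiates_L1 :: "'a measure \<Rightarrow> 'a set set \<Rightarrow> bool" where
  "differentiates_L1 M T \<longleftrightarrow> (\<forall>\<phi> :: 'a \<Rightarrow> real. integrable M \<phi> \<longrightarrow>
     (AE x in M. \<forall>\<epsilon>>0. \<exists>\<delta>>0. \<forall>I\<in>T. x \<in> I \<and> measure M I < \<delta> \<longrightarrow>
        \<bar>(1 / measure M I) * (\<integral>y\<in>I. \<phi> y \<partial>M) - \<phi> x\<bar> < \<epsilon>))"

definition is_tree :: "'a measure \<Rightarrow> 'a set set \<Rightarrow> bool" where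
  "is_tree M T \<longleftrightarrow> T \<subseteq> sets M \<and> space M \<in> T \<and> (\<forall>I\<in>T. measure M I > 0) \<and>
    (\<exists>C. (\<forall>I\<in>T. C I \<subseteq> T \<and> countable (C I) \<and> (\<exists>J1\<in>C I. \<exists>J2\<in>C I. J1 \<noteq> J2) \<and>
              disjoint (C I) \<and> (\<forall>J\<in>C I. J \<subseteq> I) \<and> \<Union> (C I) = I)
       \<and> T = (\<Union>m. tree_level C (space M) m)
       \<and> ((\<lambda>m. SUP I\<in>tree_level C (space M) m. measure M I) \<longlonglongrightarrow> 0))
    \<and> differentiates_L1 M T"

definition dyadic_max :: "'a measure \<Rightarrow> 'a set set \<Rightarrow> ('a \<Rightarrow> real) \<Rightarrow> 'a \<Rightarrow> ennreal" where
  "dyadic_max M T \<phi> x = (SUP I\<in>{I\<in>T. x \<in> I}. ennreal (avg M I \<phi>))"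

definition ennreal_powr :: "ennreal \<Rightarrow> real \<Rightarrow> ennreal" where
  "ennreal_powr x p = (if x = \<top> then \<top> else ennreal (enn2real x powr p))"

definition rearr :: "'a measure \<Rightarrow> ('a \<Rightarrow> real) \<Rightarrow> real \<Rightarrow> real" where
  "rearr M \<phi> t = Inf {s. s \<ge> 0 \<and> measure M {x\<in>space M. \<phi> x > s} < t}"

definition H_fun :: "real \<Rightarrow> real \<Rightarrow> real" where
  "H_fun p z = p * z powr (p - 1) - (p - 1) * z powr p"

definition omega :: "real \<Rightarrow> real \<Rightarrow> real" where
  "omega p y = (THE z. z \<in> {1..p / (p - 1)} \<and> H_fun p z = y)"

end

theory Submission
  imports Defs
begin

text \<open>
  Let \<open>u\<close> be the maximal function \<open>M\<^sub>\<T>\<phi>\<close> truncated at height \<open>n\<close> and restricted to \<open>K\<close>, and let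
  \<open>u\<^sup>\<star>\<close> be its decreasing rearrangement on \<open>(0, k]\<close>. The stopping-time argument on the tree gives
  the weak-type inequality \<open>\<lambda> \<mu>{M\<^sub>\<T>\<phi> > \<lambda>} \<le> \<integral>\<^bsub>{M\<^sub>\<T>\<phi> > \<lambda>}\<^esub> \<phi>\<close>. Together with the
  Hardy--Littlewood inequality \<open>\<integral>\<^bsub>E\<^esub> \<phi> \<le> \<integral>\<^bsub>(0, \<mu> E]\<^esub> \<phi>\<^sup>\<star>\<close> and the fact that the averages
  of \<open>\<phi>\<^sup>\<star>\<close> over \<open>(0, m]\<close> decrease in \<open>m\<close>, it becomes the weighted weak-type inequality
  \<open>\<lambda> |{u\<^sup>\<star> > \<lambda>}| \<le> \<integral>\<^bsub>{u\<^sup>\<star> > \<lambda>}\<^esub> \<phi>\<^sup>\<star>\<close> on \<open>(0, k]\<close>.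

  Now let \<open>u\<close> satisfy \<open>\<lambda> |{u > \<lambda>}| \<le> \<integral>\<^bsub>{u > \<lambda>}\<^esub> g\<close> on a space of mass \<open>k\<close>, and put
  \<open>a = (\<integral> g) / k\<close> and \<open>v = max u a\<close>. Integrating the weak-type inequality over the levels
  \<open>\<lambda> > a\<close> against \<open>p \<lambda>\<^sup>p\<^sup>-\<^sup>2\<close> gives \<open>\<integral> v\<^sup>p \<le> a\<^sup>p k + p/(p-1) \<integral> g (v\<^sup>p\<^sup>-\<^sup>1 - a\<^sup>p\<^sup>-\<^sup>1)\<close>, and
  Young's inequality with a free parameter \<open>c > 0\<close> bounds this by
  \<open>\<integral> g\<^sup>p / ((p-1) c\<^sup>p\<^sup>-\<^sup>1) + c \<integral> v\<^sup>p - a\<^sup>p k / (p-1)\<close>. For \<open>c = 1/z\<close> with \<open>z\<^sup>p = \<integral> v\<^sup>p / \<integral> g\<^sup>p\<close>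
  this says \<open>H\<^sub>p(z) \<ge> (\<integral> g)\<^sup>p / (k\<^sup>p\<^sup>-\<^sup>1 \<integral> g\<^sup>p)\<close>, that is \<open>z \<le> \<omega>\<^sub>p(\<dots>)\<close>, because \<open>H\<^sub>p\<close> is
  decreasing on \<open>[1, \<infinity>)\<close> and at most 1 everywhere. Monotone convergence in \<open>n\<close> finishes the proof.
\<close>

section \<open>Layer cake formulas\<close>

lemma nn_integral_superlevel_Tonelli:
  fixes v :: "'a \<Rightarrow> real" and G :: "'a \<Rightarrow> ennreal" and w :: "real \<Rightarrow> ennreal"
  assumes "sigma_finite_measure N"
    and [measurable]: "v \<in> borel_measurable N" "G \<in> borel_measurable N" "w \<in> borel_measurable borel"
  shows "(\<integral>\<^sup>+l\<in>{a<..}. w l * (\<integral>\<^sup>+x\<in>{x\<in>space N. l < v x}. G x \<partial>N) \<partial>lborel)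
       = (\<integral>\<^sup>+x. G x * (\<integral>\<^sup>+l\<in>{a<..<v x}. w l \<partial>lborel) \<partial>N)"
proof -
  interpret pair_sigma_finite N lborel
    using assms(1) by (simp add: pair_sigma_finite_def lborel.sigma_finite_measure_axioms)
  have "(\<integral>\<^sup>+l\<in>{a<..}. w l * (\<integral>\<^sup>+x\<in>{x\<in>space N. l < v x}. G x \<partial>N) \<partial>lborel)
      = (\<integral>\<^sup>+l. (\<integral>\<^sup>+x. G x * (w l * indicator {a<..<v x} l) \<partial>N) \<partial>lborel)"
  proof (intro nn_integral_cong)
    fix l :: real
    have "w l * (\<integral>\<^sup>+x\<in>{x\<in>space N. l < v x}. G x \<partial>N) * indicator {a<..} l
        = (\<integral>\<^sup>+x. w l * indicator {a<..} l * (G x * indicator {x\<in>space N. l < v x} x) \<partial>N)"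
      by (subst nn_integral_cmult) (auto simp: mult_ac)
    also have "\<dots> = (\<integral>\<^sup>+x. G x * (w l * indicator {a<..<v x} l) \<partial>N)"
      by (intro nn_integral_cong) (auto simp: indicator_def mult.commute)
    finally show "w l * (\<integral>\<^sup>+x\<in>{x\<in>space N. l < v x}. G x \<partial>N) * indicator {a<..} l
        = (\<integral>\<^sup>+x. G x * (w l * indicator {a<..<v x} l) \<partial>N)" .
  qed
  also have "\<dots> = (\<integral>\<^sup>+x. (\<integral>\<^sup>+l. G x * (w l * indicator {a<..<v x} l) \<partial>lborel) \<partial>N)"
    by (rule Fubini', measurable, simp only: greaterThanLessThan_iff, measurable)
  also have "\<dots> = (\<integral>\<^sup>+x. G x * (\<integral>\<^sup>+l\<in>{a<..<v x}. w l \<partial>lborel) \<partial>N)"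
    by (simp add: nn_integral_cmult)
  finally show ?thesis .
qed

lemma nn_integral_layer_cake:
  fixes f :: "'a \<Rightarrow> real"
  assumes "sigma_finite_measure M" and [measurable]: "f \<in> borel_measurable M"
    and nonneg: "\<And>x. x \<in> space M \<Longrightarrow> 0 \<le> f x"
  shows "(\<integral>\<^sup>+x. ennreal (f x) \<partial>M) = (\<integral>\<^sup>+s\<in>{0<..}. emeasure M {x\<in>space M. s < f x} \<partial>lborel)"
proof -
  have "(\<integral>\<^sup>+s\<in>{0<..}. emeasure M {x\<in>space M. s < f x} \<partial>lborel)
      = (\<integral>\<^sup>+s\<in>{0<..}. 1 * (\<integral>\<^sup>+x\<in>{x\<in>space M. s < f x}. 1 \<partial>M) \<partial>lborel)"
    by simp
  also have "\<dots> = (\<integral>\<^sup>+x. 1 * (\<integral>\<^sup>+s\<in>{0<..<f x}. 1 \<partial>lborel) \<partial>M)"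
    using assms by (intro nn_integral_superlevel_Tonelli) auto
  also have "\<dots> = (\<integral>\<^sup>+x. ennreal (f x) \<partial>M)"
    using nonneg by (intro nn_integral_cong) simp
  finally show ?thesis ..
qed

lemma powr_less_iff_root_less:
  fixes s y p :: real
  assumes "s > 0" "y \<ge> 0" "p > 0"
  shows "s < y powr p \<longleftrightarrow> s powr (1/p) < y"
  using powr_less_mono2[of "1/p" s "y powr p"] powr_less_mono2[of p "s powr (1/p)" y] assms
  by (auto simp: powr_powr)

lemma nn_integral_powr_mono_distribution:
  fixes f :: "'a \<Rightarrow> real" and g :: "'b \<Rightarrow> real"
  assumes "sigma_finite_measure M" "sigma_finite_measure N"
    and [measurable]: "f \<in> borel_measurable M" "g \<in> borel_measurable N"
    and f_nonneg: "\<And>x. x \<in> space M \<Longrightarrow> 0 \<le> f x" and g_nonneg: "\<And>y. y \<in> space N \<Longrightarrow> 0 \<le> g y"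
    and p: "p > 0"
    and distribution_le: "\<And>s. s > 0 \<Longrightarrow>
      emeasure M {x\<in>space M. s < f x} \<le> emeasure N {y\<in>space N. s < g y}"
  shows "(\<integral>\<^sup>+x. ennreal (f x powr p) \<partial>M) \<le> (\<integral>\<^sup>+y. ennreal (g y powr p) \<partial>N)"
proof -
  have "{x\<in>space M. s < f x powr p} = {x\<in>space M. s powr (1/p) < f x}"
    "{y\<in>space N. s < g y powr p} = {y\<in>space N. s powr (1/p) < g y}" if "s > 0" for s
    using powr_less_iff_root_less[OF that _ p] f_nonneg g_nonneg by auto
  then have "(\<integral>\<^sup>+s\<in>{0<..}. emeasure M {x\<in>space M. s < f x powr p} \<partial>lborel)
      \<le> (\<integral>\<^sup>+s\<in>{0<..}. emeasure N {y\<in>space N. s < g y powr p} \<partial>lborel)"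
    by (intro nn_integral_mono) (simp add: distribution_le indicator_def)
  then show ?thesis
    using assms by (simp add: nn_integral_layer_cake)
qed

lemma nn_integral_powr_derivative_interval:
  fixes a b q :: real
  assumes "0 < a" "a \<le> b" "q > 0"
  shows "(\<integral>\<^sup>+l\<in>{a<..<b}. ennreal (q * l powr (q - 1)) \<partial>lborel) = ennreal (b powr q - a powr q)"
proof -
  have "(\<integral>\<^sup>+l\<in>{a<..<b}. ennreal (q * l powr (q - 1)) \<partial>lborel)
      = (\<integral>\<^sup>+l. ennreal (q * l powr (q - 1)) * indicator {a..b} l \<partial>lborel)"
    using AE_lborel_singleton[of a] AE_lborel_singleton[of b]
    by (intro nn_integral_cong_AE) (auto simp: indicator_def)
  also have "\<dots> = ennreal (b powr q - a powr q)"
    using assms by (intro nn_integral_FTC_Icc) (auto intro!: derivative_eq_intros)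
  finally show ?thesis .
qed

lemma nn_integral_powr_diff_layer_cake:
  fixes v :: "'a \<Rightarrow> real" and G :: "'a \<Rightarrow> ennreal"
  assumes "sigma_finite_measure N" and [measurable]: "v \<in> borel_measurable N" "G \<in> borel_measurable N"
    and a: "0 < a" "\<And>x. x \<in> space N \<Longrightarrow> a \<le> v x" and q: "0 < q"
  shows "(\<integral>\<^sup>+x. G x * ennreal (v x powr q - a powr q) \<partial>N)
    = (\<integral>\<^sup>+l\<in>{a<..}. ennreal (q * l powr (q - 1)) * (\<integral>\<^sup>+x\<in>{x\<in>space N. l < v x}. G x \<partial>N) \<partial>lborel)"
proof -
  have "(\<integral>\<^sup>+x. G x * ennreal (v x powr q - a powr q) \<partial>N)
      = (\<integral>\<^sup>+x. G x * (\<integral>\<^sup>+l\<in>{a<..<v x}. ennreal (q * l powr (q - 1)) \<partial>lborel) \<partial>N)"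
    using a q by (intro nn_integral_cong) (simp add: nn_integral_powr_derivative_interval)
  also have "\<dots> = (\<integral>\<^sup>+l\<in>{a<..}. ennreal (q * l powr (q - 1)) * (\<integral>\<^sup>+x\<in>{x\<in>space N. l < v x}. G x \<partial>N) \<partial>lborel)"
    using assms by (intro nn_integral_superlevel_Tonelli[symmetric]) auto
  finally show ?thesis .
qed

section \<open>Decreasing rearrangements\<close>

abbreviation lborel_upto :: "real \<Rightarrow> real measure" where
  "lborel_upto c \<equiv> restrict_space lborel {0<..c}"

lemma sigma_finite_lborel_upto: "sigma_finite_measure (lborel_upto c)"
  by (intro sigma_finite_measure_restrict_space lborel.sigma_finite_measure_axioms) simp

lemma finite_measure_lborel_upto: "finite_measure (lborel_upto c)"
  by (intro finite_measureI) (cases "0 \<le> c"; simp add: emeasure_restrict_space)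

lemma nn_integral_lborel_upto_le_initial:
  fixes f :: "real \<Rightarrow> ennreal"
  assumes "m \<le> c" "{0<..<m} \<subseteq> S"
  shows "(\<integral>\<^sup>+t. f t \<partial>lborel_upto m) \<le> (\<integral>\<^sup>+t\<in>S. f t \<partial>lborel_upto c)"
proof -
  have "(\<integral>\<^sup>+t. f t \<partial>lborel_upto m) = (\<integral>\<^sup>+t. f t * indicator {0<..m} t \<partial>lborel)"
    by (simp add: nn_integral_restrict_space)
  also have "\<dots> \<le> (\<integral>\<^sup>+t. f t * indicator S t * indicator {0<..c} t \<partial>lborel)"
    using AE_lborel_singleton[of m]
  proof (intro nn_integral_mono_AE, eventually_elim)
    fix t assume "t \<noteq> m"
    with assms show "f t * indicator {0<..m} t \<le> f t * indicator S t * indicator {0<..c} t"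
      by (auto simp: indicator_def subset_eq)
  qed
  also have "\<dots> = (\<integral>\<^sup>+t\<in>S. f t \<partial>lborel_upto c)"
    by (simp add: nn_integral_restrict_space)
  finally show ?thesis .
qed

definition distribution_fun :: "'a measure \<Rightarrow> ('a \<Rightarrow> real) \<Rightarrow> real \<Rightarrow> real" where
  "distribution_fun M h s = measure M {x\<in>space M. s < h x}"

lemma distribution_fun_nonneg [simp]: "0 \<le> distribution_fun M h s"
  by (simp add: distribution_fun_def)

lemma rearr_eq_Inf_distribution_fun:
  "rearr M h t = Inf {s. 0 \<le> s \<and> distribution_fun M h s < t}"
  unfolding rearr_def distribution_fun_def ..

locale rearrangement = finite_measure M for M :: "'a measure" +
  fixes h :: "'a \<Rightarrow> real"
  assumes measurable_h [measurable]: "h \<in> borel_measurable M"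
begin

lemma distribution_fun_antimono: "s \<le> s' \<Longrightarrow> distribution_fun M h s' \<le> distribution_fun M h s"
  unfolding distribution_fun_def by (rule finite_measure_mono) auto

lemma distribution_fun_continuous_from_right:
  "(\<lambda>n. distribution_fun M h (s + 1 / Suc n)) \<longlonglongrightarrow> distribution_fun M h s"
proof -
  define A where "A n = {x\<in>space M. s + 1 / Suc n < h x}" for n
  have "incseq A"
  proof (rule incseq_SucI)
    fix n
    have "1 / real (Suc (Suc n)) \<le> 1 / real (Suc n)" by (simp add: frac_le)
    then show "A n \<subseteq> A (Suc n)" by (auto simp: A_def)
  qed
  moreover have "(\<Union>n. A n) = {x\<in>space M. s < h x}"
  proof (intro set_eqI iffI)
    fix x assume x: "x \<in> {x\<in>space M. s < h x}"
    then obtain n where "inverse (Suc n) < h x - s"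
      using reals_Archimedean[of "h x - s"] by auto
    with x show "x \<in> (\<Union>n. A n)" by (auto simp: A_def field_simps)
  next
    fix x assume "x \<in> (\<Union>n. A n)"
    then obtain n where n: "x \<in> space M" "s + 1 / Suc n < h x" by (auto simp: A_def)
    have "0 < 1 / real (Suc n)" by simp
    with n(2) have "s < h x" by linarith
    with n(1) show "x \<in> {x\<in>space M. s < h x}" by simp
  qed
  moreover have "range A \<subseteq> sets M" by (auto simp: A_def)
  with \<open>incseq A\<close> have "(\<lambda>n. measure M (A n)) \<longlonglongrightarrow> measure M (\<Union>n. A n)"
    by (intro finite_Lim_measure_incseq)
  ultimately show ?thesis by (simp add: A_def distribution_fun_def)
qed

lemma ex_distribution_fun_less:
  assumes "t > 0"
  shows "\<exists>s\<ge>0. distribution_fun M h s < t"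
proof -
  define A where "A n = {x\<in>space M. real n < h x}" for n
  have "(\<lambda>n. measure M (A n)) \<longlonglongrightarrow> measure M (\<Inter>n. A n)"
    by (rule finite_Lim_measure_decseq) (auto simp: A_def decseq_def)
  moreover have "(\<Inter>n. A n) = {}"
  proof (intro equals0I)
    fix x assume "x \<in> (\<Inter>n. A n)"
    obtain n where "h x < real n" using reals_Archimedean2 by blast
    moreover from \<open>x \<in> (\<Inter>n. A n)\<close> have "real n < h x" by (auto simp: A_def)
    ultimately show False by simp
  qed
  ultimately have "eventually (\<lambda>n. measure M (A n) < t) sequentially"
    using assms by (simp add: order_tendstoD)
  then obtain n where "measure M (A n) < t" by (auto dest: eventually_happens)
  then show ?thesis
    by (intro exI[of _ "real n"]) (simp add: A_def distribution_fun_def)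
qed

lemma rearr_nonneg: "t > 0 \<Longrightarrow> 0 \<le> rearr M h t"
  unfolding rearr_eq_Inf_distribution_fun using ex_distribution_fun_less
  by (intro cInf_greatest) auto

lemma rearr_antimono: "0 < t \<Longrightarrow> t \<le> t' \<Longrightarrow> rearr M h t' \<le> rearr M h t"
  unfolding rearr_eq_Inf_distribution_fun using ex_distribution_fun_less
  by (intro cInf_superset_mono) (auto intro: bdd_belowI[of _ 0])

lemma less_rearr_iff:
  assumes t: "t > 0" and s: "0 \<le> s"
  shows "s < rearr M h t \<longleftrightarrow> (\<exists>s'>s. t \<le> distribution_fun M h s')"
proof (intro iffI)
  assume less: "s < rearr M h t"
  define s' where "s' = (s + rearr M h t) / 2"
  have "s < s'" "s' < rearr M h t" using less by (auto simp: s'_def)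
  have "t \<le> distribution_fun M h s'"
  proof (rule ccontr)
    assume "\<not> t \<le> distribution_fun M h s'"
    then have "rearr M h t \<le> s'"
      unfolding rearr_eq_Inf_distribution_fun
      using s \<open>s < s'\<close> by (intro cInf_lower bdd_belowI[of _ 0]) auto
    with \<open>s' < rearr M h t\<close> show False by simp
  qed
  with \<open>s < s'\<close> show "\<exists>s'>s. t \<le> distribution_fun M h s'" by blast
next
  assume "\<exists>s'>s. t \<le> distribution_fun M h s'"
  then obtain s' where s': "s < s'" "t \<le> distribution_fun M h s'" by auto
  have "s' \<le> rearr M h t"
    unfolding rearr_eq_Inf_distribution_fun
  proof (rule cInf_greatest)
    show "{s. 0 \<le> s \<and> distribution_fun M h s < t} \<noteq> {}"
      using ex_distribution_fun_less t by auto
    show "s' \<le> r" if "r \<in> {s. 0 \<le> s \<and> distribution_fun M h s < t}" for r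
      using that s' distribution_fun_antimono[of r s'] by (cases "s' \<le> r") auto
  qed
  with s' show "s < rearr M h t" by simp
qed

lemma rearr_le:
  assumes "\<And>x. x \<in> space M \<Longrightarrow> h x \<le> B" and "0 \<le> B" and "0 < t"
  shows "rearr M h t \<le> B"
proof -
  have "{x\<in>space M. B < h x} = {}"
    using assms(1) by (auto simp: not_less)
  then have "distribution_fun M h B = 0"
    unfolding distribution_fun_def by (simp only: measure_empty)
  then show ?thesis
    unfolding rearr_eq_Inf_distribution_fun using assms(2,3)
    by (intro cInf_lower bdd_belowI[of _ 0]) auto
qed

lemma less_rearr_of_less_distribution_fun:
  assumes "0 \<le> s" "0 < t" "t < distribution_fun M h s"
  shows "s < rearr M h t"
proof -
  have "eventually (\<lambda>n. t < distribution_fun M h (s + 1 / Suc n)) sequentially"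
    using distribution_fun_continuous_from_right assms(3) by (rule order_tendstoD)
  then obtain n where "t < distribution_fun M h (s + 1 / Suc n)"
    by (auto dest: eventually_happens)
  then show ?thesis
    using less_rearr_iff[OF assms(2,1)] by (auto intro!: exI[of _ "s + 1 / Suc n"])
qed

lemma less_rearr_set_eq_Union:
  assumes s: "0 \<le> s"
  shows "{t\<in>{0<..c}. s < rearr M h t} = (\<Union>n. {0<..c} \<inter> {0<..distribution_fun M h (s + 1 / Suc n)})"
proof (intro set_eqI iffI)
  fix t assume "t \<in> {t\<in>{0<..c}. s < rearr M h t}"
  then have t: "0 < t" "t \<le> c" "s < rearr M h t" by auto
  then obtain s' where s': "s < s'" "t \<le> distribution_fun M h s'"
    using less_rearr_iff[OF t(1) s] by auto
  obtain n where "inverse (Suc n) < s' - s"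
    using reals_Archimedean[of "s' - s"] s' by auto
  then have "distribution_fun M h s' \<le> distribution_fun M h (s + 1 / Suc n)"
    by (intro distribution_fun_antimono) (simp add: field_simps)
  with t s' show "t \<in> (\<Union>n. {0<..c} \<inter> {0<..distribution_fun M h (s + 1 / Suc n)})"
    by (intro UN_I[of n]) auto
next
  fix t assume "t \<in> (\<Union>n. {0<..c} \<inter> {0<..distribution_fun M h (s + 1 / Suc n)})"
  then obtain n where t: "0 < t" "t \<le> c" "t \<le> distribution_fun M h (s + 1 / Suc n)"
    by auto
  then have "s < rearr M h t"
    using less_rearr_iff[OF t(1) s] by (auto intro!: exI[of _ "s + 1 / Suc n"])
  with t show "t \<in> {t\<in>{0<..c}. s < rearr M h t}" by auto
qed

lemma emeasure_lborel_upto_less_rearr: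
  assumes c: "0 \<le> c" and s: "0 \<le> s"
  shows "emeasure (lborel_upto c) {t\<in>space (lborel_upto c). s < rearr M h t}
    = ennreal (min c (distribution_fun M h s))"
proof -
  define d where "d n = distribution_fun M h (s + 1 / Suc n)" for n
  define A where "A n = {0<..c} \<inter> {0<..d n}" for n
  have d_mono: "d n \<le> d (Suc n)" for n
    unfolding d_def by (intro distribution_fun_antimono) (simp add: frac_le)
  have "A n \<subseteq> A (Suc n)" for n
    using d_mono[of n] by (auto simp: A_def)
  then have "(\<lambda>n. emeasure lborel (A n)) \<longlonglongrightarrow> emeasure lborel {t\<in>{0<..c}. s < rearr M h t}"
    unfolding less_rearr_set_eq_Union[OF s] d_def[symmetric] A_def[symmetric]
    by (intro Lim_emeasure_incseq incseq_SucI) (auto simp: A_def)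
  moreover have "emeasure lborel (A n) = ennreal (min c (d n))" for n
  proof (cases "c \<le> d n")
    case True
    then have "A n = {0<..c}" by (auto simp: A_def)
    with True c show ?thesis by simp
  next
    case False
    then have "A n = {0<..d n}" by (auto simp: A_def)
    with False show ?thesis by (simp add: d_def)
  qed
  then have "(\<lambda>n. emeasure lborel (A n)) \<longlonglongrightarrow> ennreal (min c (distribution_fun M h s))"
    unfolding d_def by (simp only:) (intro tendsto_ennrealI tendsto_min tendsto_const
      distribution_fun_continuous_from_right)
  ultimately have "emeasure lborel {t\<in>{0<..c}. s < rearr M h t} = ennreal (min c (distribution_fun M h s))"
    by (rule LIMSEQ_unique)
  then show ?thesis
    by (subst emeasure_restrict_space) auto
qed

lemma measurable_rearr [measurable]: "rearr M h \<in> borel_measurable (lborel_upto c)"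
proof -
  have "mono_on {0<..c} (\<lambda>t. - rearr M h t)"
    by (intro mono_onI) (auto intro: rearr_antimono)
  then have "(\<lambda>t. - (- rearr M h t)) \<in> borel_measurable (restrict_space borel {0<..c})"
    by (intro borel_measurable_uminus borel_measurable_mono_on_fnc)
  then show ?thesis
    by (simp add: measurable_cong_sets[OF sets_restrict_space_cong[OF sets_lborel] refl])
qed

lemma emeasure_distribution_fun: "emeasure M {x\<in>space M. s < h x} = ennreal (distribution_fun M h s)"
  by (simp add: distribution_fun_def emeasure_eq_measure)

lemma nn_integral_rearr_powr_le:
  assumes nonneg: "\<And>x. x \<in> space M \<Longrightarrow> 0 \<le> h x" and "0 \<le> c" "0 < q"
  shows "(\<integral>\<^sup>+t. ennreal (rearr M h t powr q) \<partial>lborel_upto c) \<le> (\<integral>\<^sup>+x. ennreal (h x powr q) \<partial>M)"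
proof (rule nn_integral_powr_mono_distribution)
  fix s :: real assume "0 < s"
  then have "emeasure (lborel_upto c) {t\<in>space (lborel_upto c). s < rearr M h t}
      = ennreal (min c (distribution_fun M h s))"
    using \<open>0 \<le> c\<close> by (intro emeasure_lborel_upto_less_rearr) auto
  also have "\<dots> \<le> emeasure M {x\<in>space M. s < h x}"
    by (simp add: emeasure_distribution_fun ennreal_leI)
  finally show "emeasure (lborel_upto c) {t\<in>space (lborel_upto c). s < rearr M h t}
      \<le> emeasure M {x\<in>space M. s < h x}" .
qed (use assms in \<open>auto simp: sigma_finite_lborel_upto sigma_finite_measure_axioms rearr_nonneg\<close>)

lemma nn_integral_powr_le_rearr:
  assumes nonneg: "\<And>x. x \<in> space M \<Longrightarrow> 0 \<le> h x" and "0 < q"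
    and small: "\<And>s. 0 < s \<Longrightarrow> distribution_fun M h s \<le> c"
  shows "(\<integral>\<^sup>+x. ennreal (h x powr q) \<partial>M) \<le> (\<integral>\<^sup>+t. ennreal (rearr M h t powr q) \<partial>lborel_upto c)"
proof (rule nn_integral_powr_mono_distribution)
  fix s :: real assume "0 < s"
  have "0 \<le> c" using small[of 1] distribution_fun_nonneg[of M h 1] by linarith
  have "emeasure M {x\<in>space M. s < h x} = ennreal (min c (distribution_fun M h s))"
    using small[OF \<open>0 < s\<close>] by (simp add: emeasure_distribution_fun min_def)
  also have "\<dots> = emeasure (lborel_upto c) {t\<in>space (lborel_upto c). s < rearr M h t}"
    using \<open>0 \<le> c\<close> \<open>0 < s\<close> by (intro emeasure_lborel_upto_less_rearr[symmetric]) auto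
  finally show "emeasure M {x\<in>space M. s < h x}
      \<le> emeasure (lborel_upto c) {t\<in>space (lborel_upto c). s < rearr M h t}"
    by simp
qed (use assms in \<open>auto simp: sigma_finite_lborel_upto sigma_finite_measure_axioms rearr_nonneg\<close>)

lemma set_nn_integral_le_rearr:
  assumes nonneg: "\<And>x. x \<in> space M \<Longrightarrow> 0 \<le> h x" and [measurable]: "E \<in> sets M"
  shows "(\<integral>\<^sup>+x\<in>E. ennreal (h x) \<partial>M) \<le> (\<integral>\<^sup>+t. ennreal (rearr M h t) \<partial>lborel_upto (measure M E))"
proof -
  let ?N = "lborel_upto (measure M E)"
  have "(\<integral>\<^sup>+x. ennreal ((h x * indicator E x) powr 1) \<partial>M) \<le> (\<integral>\<^sup>+t. ennreal (rearr M h t powr 1) \<partial>?N)"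
  proof (rule nn_integral_powr_mono_distribution)
    fix s :: real assume "0 < s"
    then have "{x\<in>space M. s < h x * indicator E x} = E \<inter> {x\<in>space M. s < h x}"
      using sets.sets_into_space[OF \<open>E \<in> sets M\<close>] by (auto simp: indicator_def)
    then have "emeasure M {x\<in>space M. s < h x * indicator E x}
        \<le> ennreal (min (measure M E) (distribution_fun M h s))"
      by (auto simp: emeasure_eq_measure distribution_fun_def intro!: ennreal_leI finite_measure_mono)
    also have "\<dots> = emeasure ?N {t\<in>space ?N. s < rearr M h t}"
      using \<open>0 < s\<close> by (intro emeasure_lborel_upto_less_rearr[symmetric]) auto
    finally show "emeasure M {x\<in>space M. s < h x * indicator E x} \<le> emeasure ?N {t\<in>space ?N. s < rearr M h t}" .
  qed (use nonneg in \<open>auto simp: sigma_finite_lborel_upto sigma_finite_measure_axioms rearr_nonneg\<close>)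
  moreover have "(\<integral>\<^sup>+x\<in>E. ennreal (h x) \<partial>M) = (\<integral>\<^sup>+x. ennreal ((h x * indicator E x) powr 1) \<partial>M)"
    using nonneg by (intro nn_integral_cong) (simp add: indicator_def)
  moreover have "(\<integral>\<^sup>+t. ennreal (rearr M h t powr 1) \<partial>?N) = (\<integral>\<^sup>+t. ennreal (rearr M h t) \<partial>?N)"
    by (intro nn_integral_cong) (simp add: rearr_nonneg)
  ultimately show ?thesis by simp
qed

lemma integrable_rearr_powr:
  assumes nonneg: "\<And>x. x \<in> space M \<Longrightarrow> 0 \<le> h x" and "0 \<le> c" "0 < q"
    and "integrable M (\<lambda>x. h x powr q)"
  shows "integrable (lborel_upto c) (\<lambda>t. rearr M h t powr q)"
proof (rule integrableI_nonneg)
  have "(\<integral>\<^sup>+t. ennreal (rearr M h t powr q) \<partial>lborel_upto c) \<le> (\<integral>\<^sup>+x. ennreal (h x powr q) \<partial>M)"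
    using assms by (intro nn_integral_rearr_powr_le) auto
  also have "\<dots> < \<infinity>"
    using assms by (simp add: nn_integral_eq_integral)
  finally show "(\<integral>\<^sup>+t. ennreal (rearr M h t powr q) \<partial>lborel_upto c) < \<infinity>" .
qed auto

lemma integrable_rearr:
  assumes "\<And>x. x \<in> space M \<Longrightarrow> 0 \<le> h x" and "0 \<le> c" and "integrable M h"
  shows "integrable (lborel_upto c) (rearr M h)"
proof -
  have "integrable M (\<lambda>x. h x powr 1)"
    using assms by (subst Bochner_Integration.integrable_cong[OF refl, of _ _ h]) auto
  then have "integrable (lborel_upto c) (\<lambda>t. rearr M h t powr 1)"
    using assms by (intro integrable_rearr_powr) auto
  then show ?thesis
    by (subst (asm) Bochner_Integration.integrable_cong[OF refl, of _ _ "rearr M h"])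
      (auto simp: space_restrict_space rearr_nonneg)
qed

lemma integral_rearr_pos:
  assumes nonneg: "\<And>x. x \<in> space M \<Longrightarrow> 0 \<le> h x" and "0 < c"
    and "integrable M h" and pos: "0 < (\<integral>x. h x \<partial>M)"
  shows "0 < (\<integral>t. rearr M h t \<partial>lborel_upto c)"
proof -
  have "integrable (lborel_upto c) (rearr M h)"
    using assms by (intro integrable_rearr) auto
  have "0 < distribution_fun M h 0"
  proof (rule ccontr)
    assume "\<not> 0 < distribution_fun M h 0"
    then have "emeasure M {x\<in>space M. 0 < h x} = 0"
      using distribution_fun_nonneg[of M h 0] by (simp add: emeasure_distribution_fun)
    then have "AE x in M. h x = 0"
      using nonneg by (subst AE_iff_measurable[of "{x\<in>space M. 0 < h x}"]) (auto simp: less_le)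
    with pos show False by (simp add: integral_eq_zero_AE)
  qed
  define \<tau> where "\<tau> = min c (distribution_fun M h 0)"
  have "0 < \<tau>" using \<open>0 < c\<close> \<open>0 < distribution_fun M h 0\<close> by (simp add: \<tau>_def)
  have "(\<integral>t. rearr M h t \<partial>lborel_upto c) \<noteq> 0"
  proof
    assume "(\<integral>t. rearr M h t \<partial>lborel_upto c) = 0"
    then have "AE t in lborel_upto c. rearr M h t = 0"
      using \<open>integrable (lborel_upto c) (rearr M h)\<close>
      by (subst integral_nonneg_eq_0_iff_AE[symmetric]) (auto intro!: rearr_nonneg)
    moreover have "0 < rearr M h t" if "t \<in> {0<..<\<tau>}" for t
      using that by (intro less_rearr_of_less_distribution_fun) (auto simp: \<tau>_def)
    ultimately have "AE t in lborel_upto c. t \<notin> {0<..<\<tau>}"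
      by (metis (mono_tags, lifting) eventually_mono less_irrefl)
    moreover have "emeasure (lborel_upto c) {0<..<\<tau>} = \<tau>"
      using \<open>0 < \<tau>\<close> by (subst emeasure_restrict_space) (auto simp: \<tau>_def)
    ultimately show False
      using \<open>0 < \<tau>\<close> by (subst (asm) AE_iff_measurable[of "{0<..<\<tau>}"])
        (auto simp: \<tau>_def sets_restrict_space_iff)
  qed
  moreover have "0 \<le> (\<integral>t. rearr M h t \<partial>lborel_upto c)"
    by (intro integral_nonneg_AE AE_I2) (auto intro: rearr_nonneg)
  ultimately show ?thesis by simp
qed

lemma rearr_average_antimono:
  assumes "0 < m" "m \<le> m'"
  shows "ennreal m * (\<integral>\<^sup>+t. ennreal (rearr M h t) \<partial>lborel_upto m')
    \<le> ennreal m' * (\<integral>\<^sup>+t. ennreal (rearr M h t) \<partial>lborel_upto m)"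
proof -
  define I where "I = (\<integral>\<^sup>+t. ennreal (rearr M h t) \<partial>lborel_upto m)"
  define H where "H = (\<integral>\<^sup>+t. ennreal (rearr M h t) * indicator {m<..m'} t \<partial>lborel_upto m')"
  define r where "r = rearr M h m"
  have r: "0 \<le> r" using assms by (simp add: r_def rearr_nonneg)
  have [measurable]: "{0<..m} \<in> sets (lborel_upto m')" "{m<..m'} \<in> sets (lborel_upto m')"
    using assms by (auto simp: sets_restrict_space_iff)
  have "(\<integral>\<^sup>+t. ennreal (rearr M h t) \<partial>lborel_upto m')
      = (\<integral>\<^sup>+t. ennreal (rearr M h t) * indicator {0<..m} t
          + ennreal (rearr M h t) * indicator {m<..m'} t \<partial>lborel_upto m')"
    by (intro nn_integral_cong) (auto simp: space_restrict_space indicator_def)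
  also have "\<dots> = (\<integral>\<^sup>+t. ennreal (rearr M h t) * indicator {0<..m} t \<partial>lborel_upto m') + H"
    unfolding H_def by (intro nn_integral_add) auto
  also have "(\<integral>\<^sup>+t. ennreal (rearr M h t) * indicator {0<..m} t \<partial>lborel_upto m') = I"
    using assms unfolding I_def
    by (simp add: nn_integral_restrict_space) (intro nn_integral_cong; simp add: indicator_def)
  finally have split: "(\<integral>\<^sup>+t. ennreal (rearr M h t) \<partial>lborel_upto m') = I + H" .
  have "H \<le> (\<integral>\<^sup>+t. ennreal r * indicator {m<..m'} t \<partial>lborel_upto m')"
    unfolding H_def r_def using assms
    by (intro nn_integral_mono) (auto simp: indicator_def intro!: ennreal_leI rearr_antimono)
  also have "\<dots> = ennreal r * ennreal (m' - m)"
    using assms by (simp add: nn_integral_cmult_indicator emeasure_restrict_space subset_eq)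
  finally have H: "H \<le> ennreal r * ennreal (m' - m)" .
  have "ennreal (r * m) = (\<integral>\<^sup>+t. ennreal r \<partial>lborel_upto m)"
    using assms r by (simp add: emeasure_restrict_space space_restrict_space ennreal_mult)
  also have "\<dots> \<le> I"
    unfolding I_def r_def
    by (intro nn_integral_mono) (auto simp: space_restrict_space intro!: ennreal_leI rearr_antimono)
  finally have rm: "ennreal (r * m) \<le> I" .
  have "ennreal m * H \<le> ennreal m * (ennreal r * ennreal (m' - m))"
    using H by (rule mult_left_mono) simp
  also have "\<dots> = ennreal (m' - m) * ennreal (r * m)"
    using assms r by (simp add: ennreal_mult[symmetric] mult_ac)
  also have "\<dots> \<le> ennreal (m' - m) * I"
    using rm by (rule mult_left_mono) simp
  finally have "ennreal m * I + ennreal m * H \<le> ennreal m * I + ennreal (m' - m) * I"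
    by (rule add_left_mono)
  also have "\<dots> = ennreal m' * I"
    using assms by (simp add: distrib_right[symmetric] ennreal_plus[symmetric] del: ennreal_plus)
  finally show ?thesis
    unfolding split I_def by (simp add: distrib_left)
qed

lemma rearr_weak_type:
  fixes u :: "'a \<Rightarrow> real"
  assumes [measurable]: "u \<in> borel_measurable M" and nonneg: "\<And>x. x \<in> space M \<Longrightarrow> 0 \<le> h x"
    and "0 < c" "0 < l" and [measurable]: "E \<in> sets M" and level_subset: "{x\<in>space M. l < u x} \<subseteq> E"
    and weak: "ennreal l * emeasure M E \<le> (\<integral>\<^sup>+x\<in>E. ennreal (h x) \<partial>M)"
  defines "S \<equiv> {t\<in>space (lborel_upto c). l < rearr M u t}"
  shows "ennreal l * emeasure (lborel_upto c) S \<le> (\<integral>\<^sup>+t\<in>S. ennreal (rearr M h t) \<partial>lborel_upto c)"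
proof -
  interpret u: rearrangement M u by standard (rule \<open>u \<in> borel_measurable M\<close>)
  define m where "m = min c (distribution_fun M u l)"
  have emeasure_S: "emeasure (lborel_upto c) S = ennreal m"
    unfolding S_def m_def using \<open>0 < c\<close> \<open>0 < l\<close> by (intro u.emeasure_lborel_upto_less_rearr) auto
  show ?thesis
  proof (cases "m = 0")
    case False
    moreover have "0 \<le> m" using \<open>0 < c\<close> by (simp add: m_def)
    ultimately have "0 < m" by simp
    define m' where "m' = measure M E"
    have "m \<le> m'"
      unfolding m_def m'_def distribution_fun_def using level_subset
      by (intro min.coboundedI2 finite_measure_mono) auto
    then have "0 < m'" using \<open>0 < m\<close> by simp
    \<comment> \<open>pass from level \<open>m' = \<mu> E\<close> down to \<open>m\<close>: averages of a decreasing function decrease\<close>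
    have "ennreal m' * (ennreal l * ennreal m) = ennreal m * (ennreal l * emeasure M E)"
      by (simp add: m'_def emeasure_eq_measure mult_ac)
    also have "\<dots> \<le> ennreal m * (\<integral>\<^sup>+t. ennreal (rearr M h t) \<partial>lborel_upto m')"
      using weak set_nn_integral_le_rearr[OF nonneg \<open>E \<in> sets M\<close>]
      by (intro mult_left_mono) (auto simp: m'_def)
    also have "\<dots> \<le> ennreal m' * (\<integral>\<^sup>+t. ennreal (rearr M h t) \<partial>lborel_upto m)"
      using \<open>0 < m\<close> \<open>m \<le> m'\<close> by (rule rearr_average_antimono)
    finally have "ennreal l * ennreal m \<le> (\<integral>\<^sup>+t. ennreal (rearr M h t) \<partial>lborel_upto m)"
      using \<open>0 < m'\<close> by (simp add: ennreal_mult_le_mult_iff)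
    also have "\<dots> \<le> (\<integral>\<^sup>+t\<in>S. ennreal (rearr M h t) \<partial>lborel_upto c)"
    proof (rule nn_integral_lborel_upto_le_initial)
      show "m \<le> c" by (simp add: m_def)
      show "{0<..<m} \<subseteq> S"
        using \<open>0 < l\<close> unfolding S_def m_def by (auto intro: u.less_rearr_of_less_distribution_fun)
    qed
    finally show ?thesis
      by (simp add: emeasure_S)
  qed (simp add: emeasure_S)
qed

end

section \<open>The function \<open>\<omega>\<^sub>p\<close>\<close>

lemma powr_diff_one_mult:
  fixes x q :: real
  assumes "0 < x"
  shows "x powr (q - 1) * x = x powr q"
  using powr_add[of x "q - 1" 1] assms by simp

lemma Young_powr_weighted:
  fixes x w p c :: real
  assumes x: "0 \<le> x" and w: "0 \<le> w" and p: "1 < p" and c: "0 < c"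
  shows "x * w powr (p - 1) \<le> x powr p / (p * c powr (p - 1)) + (p - 1) / p * c * w powr p"
proof -
  define a where "a = x / c powr ((p - 1) / p)"
  define b where "b = c powr ((p - 1) / p) * w powr (p - 1)"
  have "x * w powr (p - 1) = a * b"
    using c by (simp add: a_def b_def)
  also have "\<dots> \<le> a powr p / p + b powr (p / (p - 1)) / (p / (p - 1))"
    using x w p c by (intro Youngs_inequality) (auto simp: a_def b_def field_simps)
  also have "a powr p = x powr p / c powr (p - 1)"
    using x c p by (simp add: a_def powr_divide powr_powr)
  also have "b powr (p / (p - 1)) = c * w powr p"
    using w c p by (simp add: b_def powr_mult powr_powr)
  finally show ?thesis
    using p by (simp add: field_simps)
qed

lemma H_fun_le_one:
  assumes "0 \<le> z" "1 < p"
  shows "H_fun p z \<le> 1"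
proof -
  have "1 * z powr (p - 1) \<le> 1 powr p / (p * 1 powr (p - 1)) + (p - 1) / p * 1 * z powr p"
    using assms by (intro Young_powr_weighted) auto
  then show ?thesis
    using assms by (simp add: H_fun_def field_simps)
qed

lemma H_fun_strict_antimono:
  assumes p: "1 < p" and z: "1 \<le> z1" "z1 < z2"
  shows "H_fun p z2 < H_fun p z1"
proof (rule DERIV_neg_imp_decreasing_open[OF z(2)])
  fix x assume x: "z1 < x" "x < z2"
  then have "1 < x" using z by simp
  have "(H_fun p has_real_derivative p * (p - 1) * (x powr (p - 2) - x powr (p - 1))) (at x)"
    unfolding H_fun_def[abs_def] using \<open>1 < x\<close>
    by (auto intro!: derivative_eq_intros simp: algebra_simps)
  moreover have "x powr (p - 2) < x powr (p - 1)"
    using \<open>1 < x\<close> by (intro powr_less_mono) auto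
  ultimately show "\<exists>y. (H_fun p has_real_derivative y) (at x) \<and> y < 0"
    using p by (intro exI conjI) (auto simp: mult_pos_neg)
next
  show "continuous_on {z1..z2} (H_fun p)"
    using z unfolding H_fun_def by (intro continuous_intros) auto
qed

lemma H_fun_one [simp]: "H_fun p 1 = 1"
  by (simp add: H_fun_def)

lemma H_fun_conjugate_exponent:
  assumes "1 < p"
  shows "H_fun p (p / (p - 1)) = 0"
proof -
  define q where "q = p / (p - 1)"
  have "q powr p = q powr (p - 1) * q"
    by (rule powr_diff_one_mult[symmetric]) (use assms in \<open>simp add: q_def\<close>)
  moreover have "(p - 1) * q = p"
    using assms by (simp add: q_def)
  ultimately show ?thesis
    unfolding q_def[symmetric] H_fun_def by (simp add: mult.left_commute)
qed

lemma omega_in_range_and_H_fun: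
  assumes p: "1 < p" and y: "0 \<le> y" "y \<le> 1"
  shows "omega p y \<in> {1..p / (p - 1)}" "H_fun p (omega p y) = y"
proof -
  have "continuous_on {1..p / (p - 1)} (H_fun p)"
    unfolding H_fun_def by (intro continuous_intros) auto
  moreover have "1 \<le> p / (p - 1)"
    using p by (simp add: field_simps)
  ultimately obtain z where z: "z \<in> {1..p / (p - 1)}" "H_fun p z = y"
    using IVT2'[of "H_fun p" "p / (p - 1)" y 1] y H_fun_conjugate_exponent[OF p] by auto
  have "w = z" if "w \<in> {1..p / (p - 1)} \<and> H_fun p w = y" for w
    using that z H_fun_strict_antimono[OF p, of w z] H_fun_strict_antimono[OF p, of z w]
    by (cases w z rule: linorder_cases) auto
  with z have "omega p y = z"
    unfolding omega_def by (intro the_equality) auto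
  with z show "omega p y \<in> {1..p / (p - 1)}" "H_fun p (omega p y) = y" by auto
qed

lemma le_omega:
  assumes p: "1 < p" and z: "0 \<le> z" and y: "0 \<le> y" "y \<le> H_fun p z"
  shows "z \<le> omega p y"
proof (rule ccontr)
  assume "\<not> z \<le> omega p y"
  have "y \<le> 1" using y H_fun_le_one[OF z p] by simp
  note omega = omega_in_range_and_H_fun[OF p y(1) this]
  with \<open>\<not> z \<le> omega p y\<close> have "H_fun p z < H_fun p (omega p y)"
    by (intro H_fun_strict_antimono[OF p]) auto
  with omega y show False by simp
qed

lemma le_omega_bound:
  fixes V Q A p :: real
  assumes p: "1 < p" and A: "0 < A" "A \<le> V" and Q: "0 \<le> Q"
    and Young: "\<And>c. 0 < c \<Longrightarrow> V \<le> Q / ((p - 1) * c powr (p - 1)) + c * V - A / (p - 1)"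
  shows "V \<le> Q * omega p (A / Q) powr p"
proof -
  have "0 < Q"
  proof (rule ccontr)
    assume "\<not> 0 < Q"
    with Q Young[of "1 / 2"] have "V \<le> V / 2 - A / (p - 1)" by simp
    moreover have "0 < A / (p - 1)" using A p by simp
    ultimately show False using A by simp
  qed
  \<comment> \<open>the parameter \<open>c = 1 / z\<close> turns the Young bound into \<open>A \<le> Q * H_fun p z\<close>\<close>
  define z where "z = (V / Q) powr (1 / p)"
  have z: "0 < z" using A \<open>0 < Q\<close> by (simp add: z_def)
  have V: "V = Q * z powr p"
    using A \<open>0 < Q\<close> p by (simp add: z_def powr_powr)
  have zp: "z powr p = z powr (p - 1) * z"
    using z by (rule powr_diff_one_mult[symmetric])
  have "V \<le> Q / ((p - 1) * (1 / z) powr (p - 1)) + 1 / z * V - A / (p - 1)"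
    using Young[of "1 / z"] z by simp
  also have "\<dots> = Q * z powr (p - 1) / (p - 1) + Q * z powr (p - 1) - A / (p - 1)"
    using z unfolding V zp by (simp add: powr_divide)
  finally have "V \<le> Q * z powr (p - 1) / (p - 1) + Q * z powr (p - 1) - A / (p - 1)" .
  then have "(p - 1) * V \<le> (p - 1) * (Q * z powr (p - 1) / (p - 1) + Q * z powr (p - 1) - A / (p - 1))"
    using p by (intro mult_left_mono) auto
  also have "\<dots> = (p - 1) * (Q * z powr (p - 1) / (p - 1)) + (p - 1) * (Q * z powr (p - 1))
      - (p - 1) * (A / (p - 1))"
    by (simp only: distrib_left right_diff_distrib)
  also have "\<dots> = Q * z powr (p - 1) + (p - 1) * (Q * z powr (p - 1)) - A"
    using p by simp
  also have "\<dots> = p * (Q * z powr (p - 1)) - A"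
    by (simp add: algebra_simps)
  finally have "A \<le> Q * (p * z powr (p - 1) - (p - 1) * z powr p)"
    unfolding V by (simp add: algebra_simps)
  then have "A / Q \<le> H_fun p z"
    using \<open>0 < Q\<close> by (simp add: H_fun_def divide_le_eq mult.commute)
  then have "z \<le> omega p (A / Q)"
    using A \<open>0 < Q\<close> z p by (intro le_omega) auto
  then have "z powr p \<le> omega p (A / Q) powr p"
    using z p by (intro powr_mono2) auto
  then show ?thesis
    unfolding V using \<open>0 < Q\<close> by simp
qed

section \<open>An \<open>L\<^sup>p\<close> bound from a weighted weak-type inequality\<close>

lemma nn_integral_max_powr_diff_le_weak_type:
  fixes u g :: "'a \<Rightarrow> real"
  assumes "sigma_finite_measure N" and [measurable]: "u \<in> borel_measurable N" "g \<in> borel_measurable N"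
    and g_nonneg: "\<And>x. x \<in> space N \<Longrightarrow> 0 \<le> g x" and p: "1 < p" and a: "0 < a"
    and weak: "\<And>l. a < l \<Longrightarrow> ennreal l * emeasure N {x\<in>space N. l < u x}
      \<le> (\<integral>\<^sup>+x\<in>{x\<in>space N. l < u x}. ennreal (g x) \<partial>N)"
  shows "(\<integral>\<^sup>+x. ennreal (max (u x) a powr p - a powr p) \<partial>N)
    \<le> (\<integral>\<^sup>+x. ennreal (p / (p - 1) * g x * (max (u x) a powr (p - 1) - a powr (p - 1))) \<partial>N)"
proof -
  \<comment> \<open>both sides are layer-cake integrals over the levels \<open>l > a\<close>, compared level by level\<close>
  define v where "v x = max (u x) a" for x
  have [measurable]: "v \<in> borel_measurable N" by (simp add: v_def[abs_def])
  have v_ge: "a \<le> v x" for x by (simp add: v_def)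
  have level: "{x\<in>space N. l < v x} = {x\<in>space N. l < u x}" if "a < l" for l
    using that by (auto simp: v_def)
  have pointwise: "ennreal (p * l powr (p - 1)) * emeasure N {x\<in>space N. l < u x}
      \<le> ennreal ((p - 1) * l powr (p - 1 - 1))
        * (\<integral>\<^sup>+x\<in>{x\<in>space N. l < u x}. ennreal (p / (p - 1)) * ennreal (g x) \<partial>N)" if "a < l" for l
  proof -
    have "0 < l" using a that by simp
    have "l powr (p - 1) = l powr (p - 1 - 1) * l"
      using \<open>0 < l\<close> by (rule powr_diff_one_mult[symmetric])
    then have "ennreal (p * l powr (p - 1))
        = ennreal ((p - 1) * l powr (p - 1 - 1)) * ennreal (p / (p - 1)) * ennreal l"
      using p \<open>0 < l\<close> by (simp add: ennreal_mult[symmetric])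
    moreover have "(\<integral>\<^sup>+x\<in>{x\<in>space N. l < u x}. ennreal (p / (p - 1)) * ennreal (g x) \<partial>N)
        = ennreal (p / (p - 1)) * (\<integral>\<^sup>+x\<in>{x\<in>space N. l < u x}. ennreal (g x) \<partial>N)"
      unfolding mult.assoc by (rule nn_integral_cmult) measurable
    ultimately show ?thesis
      using mult_left_mono[OF weak[OF that], of "ennreal ((p - 1) * l powr (p - 1 - 1)) * ennreal (p / (p - 1))"]
      by (simp add: mult.assoc)
  qed
  have "(\<integral>\<^sup>+x. ennreal (v x powr p - a powr p) \<partial>N)
      = (\<integral>\<^sup>+l\<in>{a<..}. ennreal (p * l powr (p - 1)) * (\<integral>\<^sup>+x\<in>{x\<in>space N. l < v x}. 1 \<partial>N) \<partial>lborel)"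
    using nn_integral_powr_diff_layer_cake[of N v "\<lambda>_. 1" a p] assms v_ge by simp
  also have "\<dots> \<le> (\<integral>\<^sup>+l\<in>{a<..}. ennreal ((p - 1) * l powr (p - 1 - 1))
      * (\<integral>\<^sup>+x\<in>{x\<in>space N. l < v x}. ennreal (p / (p - 1)) * ennreal (g x) \<partial>N) \<partial>lborel)"
    using pointwise level by (intro nn_integral_mono) (auto split: split_indicator)
  also have "\<dots> = (\<integral>\<^sup>+x. ennreal (p / (p - 1)) * ennreal (g x) * ennreal (v x powr (p - 1) - a powr (p - 1)) \<partial>N)"
    using assms v_ge by (intro nn_integral_powr_diff_layer_cake[symmetric]) auto
  also have "\<dots> = (\<integral>\<^sup>+x. ennreal (p / (p - 1) * g x * (v x powr (p - 1) - a powr (p - 1))) \<partial>N)"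
  proof (intro nn_integral_cong)
    fix x assume "x \<in> space N"
    have "a powr (p - 1) \<le> v x powr (p - 1)"
      using p a v_ge[of x] by (intro powr_mono2) auto
    with p g_nonneg[OF \<open>x \<in> space N\<close>]
    show "ennreal (p / (p - 1)) * ennreal (g x) * ennreal (v x powr (p - 1) - a powr (p - 1))
        = ennreal (p / (p - 1) * g x * (v x powr (p - 1) - a powr (p - 1)))"
      by (simp add: ennreal_mult[symmetric])
  qed
  finally show ?thesis by (simp add: v_def)
qed

lemma nn_integral_Young_bound:
  fixes g w :: "'a \<Rightarrow> real"
  assumes [measurable]: "g \<in> borel_measurable N" "w \<in> borel_measurable N"
    and g_nonneg: "\<And>x. x \<in> space N \<Longrightarrow> 0 \<le> g x" and w_ge: "\<And>x. x \<in> space N \<Longrightarrow> a \<le> w x"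
    and p: "1 < p" and a: "0 < a" and c: "0 < c"
    and integrable: "integrable N g" "integrable N (\<lambda>x. g x powr p)" "integrable N (\<lambda>x. w x powr p)"
  defines "R \<equiv> (\<integral>x. g x powr p \<partial>N) / ((p - 1) * c powr (p - 1)) + c * (\<integral>x. w x powr p \<partial>N)
      - p / (p - 1) * a powr (p - 1) * (\<integral>x. g x \<partial>N)"
  shows "0 \<le> R" "(\<integral>\<^sup>+x. ennreal (p / (p - 1) * g x * (w x powr (p - 1) - a powr (p - 1))) \<partial>N) \<le> ennreal R"
proof -
  define Y where "Y x = g x powr p / ((p - 1) * c powr (p - 1)) + c * w x powr p
    - p / (p - 1) * a powr (p - 1) * g x" for x
  have Young: "p / (p - 1) * g x * (w x powr (p - 1) - a powr (p - 1)) \<le> Y x" if "x \<in> space N" for x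
  proof -
    have "g x * w x powr (p - 1) \<le> g x powr p / (p * c powr (p - 1)) + (p - 1) / p * c * w x powr p"
      using that g_nonneg w_ge a p c by (intro Young_powr_weighted) (auto intro: order_trans[of 0 a])
    then have "p / (p - 1) * (g x * w x powr (p - 1))
        \<le> p / (p - 1) * (g x powr p / (p * c powr (p - 1)) + (p - 1) / p * c * w x powr p)"
      using p by (intro mult_left_mono) auto
    moreover have "p / (p - 1) * (g x powr p / (p * c powr (p - 1)) + (p - 1) / p * c * w x powr p)
        = g x powr p / ((p - 1) * c powr (p - 1)) + c * w x powr p"
      using p c by (simp add: field_simps)
    moreover have "p / (p - 1) * g x * (w x powr (p - 1) - a powr (p - 1))
        = p / (p - 1) * (g x * w x powr (p - 1)) - p / (p - 1) * a powr (p - 1) * g x"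
      by (simp add: algebra_simps)
    ultimately show ?thesis
      unfolding Y_def by linarith
  qed
  have lower: "0 \<le> p / (p - 1) * g x * (w x powr (p - 1) - a powr (p - 1))" if "x \<in> space N" for x
  proof -
    have "a powr (p - 1) \<le> w x powr (p - 1)"
      using that w_ge a p by (intro powr_mono2) auto
    with that g_nonneg p show ?thesis by simp
  qed
  have "integrable N Y"
    unfolding Y_def using integrable by auto
  have Y_nonneg: "0 \<le> Y x" if "x \<in> space N" for x
    using Young[OF that] lower[OF that] by linarith
  have R: "R = (\<integral>x. Y x \<partial>N)"
    unfolding Y_def R_def using integrable by simp
  then show "0 \<le> R"
    using Y_nonneg by (simp add: integral_nonneg_AE)
  have "(\<integral>\<^sup>+x. ennreal (p / (p - 1) * g x * (w x powr (p - 1) - a powr (p - 1))) \<partial>N)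
      \<le> (\<integral>\<^sup>+x. ennreal (Y x) \<partial>N)"
    using Young by (intro nn_integral_mono ennreal_leI) auto
  also have "\<dots> = ennreal R"
    unfolding R using \<open>integrable N Y\<close> Y_nonneg by (intro nn_integral_eq_integral) auto
  finally show "(\<integral>\<^sup>+x. ennreal (p / (p - 1) * g x * (w x powr (p - 1) - a powr (p - 1))) \<partial>N) \<le> ennreal R" .
qed

lemma (in finite_measure) integrable_max_powr:
  fixes u :: "'a \<Rightarrow> real"
  assumes [measurable]: "u \<in> borel_measurable M" and "\<And>x. x \<in> space M \<Longrightarrow> u x \<le> B" "0 < a" "0 < p"
  shows "integrable M (\<lambda>x. max (u x) a powr p)"
  using assms by (intro integrable_const_bound[where B = "max B a powr p"]) (auto intro!: powr_mono2 max.mono)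

lemma integral_max_powr_le_weak_type:
  fixes u g :: "'a \<Rightarrow> real"
  assumes "finite_measure N" and [measurable]: "u \<in> borel_measurable N" "g \<in> borel_measurable N"
    and u_le: "\<And>x. x \<in> space N \<Longrightarrow> u x \<le> B" and g_nonneg: "\<And>x. x \<in> space N \<Longrightarrow> 0 \<le> g x"
    and p: "1 < p" and a: "0 < a" and c: "0 < c"
    and integrable: "integrable N g" "integrable N (\<lambda>x. g x powr p)"
    and weak: "\<And>l. a < l \<Longrightarrow> ennreal l * emeasure N {x\<in>space N. l < u x}
      \<le> (\<integral>\<^sup>+x\<in>{x\<in>space N. l < u x}. ennreal (g x) \<partial>N)"
  shows "(\<integral>x. max (u x) a powr p \<partial>N) \<le> a powr p * measure N (space N)
    + ((\<integral>x. g x powr p \<partial>N) / ((p - 1) * c powr (p - 1)) + c * (\<integral>x. max (u x) a powr p \<partial>N)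
      - p / (p - 1) * a powr (p - 1) * (\<integral>x. g x \<partial>N))" (is "?V \<le> ?A + ?R")
proof -
  interpret finite_measure N by fact
  have v_integrable: "integrable N (\<lambda>x. max (u x) a powr p)"
    using u_le a p by (intro integrable_max_powr) auto
  have "0 \<le> ?R" and Young: "(\<integral>\<^sup>+x. ennreal (p / (p - 1) * g x * (max (u x) a powr (p - 1) - a powr (p - 1))) \<partial>N)
      \<le> ennreal ?R"
    using g_nonneg p a c integrable v_integrable by (intro nn_integral_Young_bound; simp)+
  have "ennreal (\<integral>x. max (u x) a powr p - a powr p \<partial>N)
      = (\<integral>\<^sup>+x. ennreal (max (u x) a powr p - a powr p) \<partial>N)"
    using v_integrable a p by (intro nn_integral_eq_integral[symmetric]) (auto intro!: powr_mono2)
  also have "\<dots> \<le> ennreal ?R"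
    using sigma_finite_measure_axioms g_nonneg p a weak Young
    by (intro order_trans[OF nn_integral_max_powr_diff_le_weak_type]) auto
  finally have "(\<integral>x. max (u x) a powr p - a powr p \<partial>N) \<le> ?R"
    using \<open>0 \<le> ?R\<close> by simp
  moreover have "(\<integral>x. max (u x) a powr p - a powr p \<partial>N) = ?V - ?A"
    using v_integrable by (simp add: mult.commute)
  ultimately show ?thesis by simp
qed

lemma integral_max_mean_powr_le_omega:
  fixes u g :: "'a \<Rightarrow> real"
  assumes "finite_measure N" and k: "measure N (space N) = k" "0 < k"
    and [measurable]: "u \<in> borel_measurable N" "g \<in> borel_measurable N"
    and u_le: "\<And>x. x \<in> space N \<Longrightarrow> u x \<le> B" and g_nonneg: "\<And>x. x \<in> space N \<Longrightarrow> 0 \<le> g x"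
    and p: "1 < p" and integrable: "integrable N g" "integrable N (\<lambda>x. g x powr p)"
    and G_pos: "0 < (\<integral>x. g x \<partial>N)"
    and weak: "\<And>l. 0 < l \<Longrightarrow> ennreal l * emeasure N {x\<in>space N. l < u x}
      \<le> (\<integral>\<^sup>+x\<in>{x\<in>space N. l < u x}. ennreal (g x) \<partial>N)"
  defines "G \<equiv> \<integral>x. g x \<partial>N" and "Q \<equiv> \<integral>x. g x powr p \<partial>N"
  shows "(\<integral>x. max (u x) (G / k) powr p \<partial>N) \<le> Q * omega p (G powr p / (k powr (p - 1) * Q)) powr p"
proof -
  interpret finite_measure N by fact
  define a where "a = G / k"
  have a: "0 < a" using G_pos k by (simp add: a_def G_def)
  define V where "V = (\<integral>x. max (u x) a powr p \<partial>N)"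
  have "a powr p * k \<le> V"
  proof -
    have "(\<integral>x. a powr p \<partial>N) \<le> V"
      unfolding V_def using u_le a p by (intro integral_mono integrable_max_powr) (auto intro: powr_mono2)
    then show ?thesis using k by (simp add: mult.commute)
  qed
  have "p / (p - 1) * a powr (p - 1) * G = a powr p * k + a powr p * k / (p - 1)"
  proof -
    have "a powr (p - 1) * G = (a powr (p - 1) * a) * k"
      using k by (simp add: a_def)
    also have "\<dots> = a powr p * k"
      using a by (simp only: powr_diff_one_mult)
    finally have "a powr (p - 1) * G = a powr p * k" .
    then have "p / (p - 1) * a powr (p - 1) * G = p / (p - 1) * (a powr p * k)"
      by (simp add: mult.assoc)
    also have "\<dots> = a powr p * k + a powr p * k / (p - 1)"
      using p by (simp add: field_simps)
    finally show ?thesis .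
  qed
  moreover have "V \<le> a powr p * k + (Q / ((p - 1) * c powr (p - 1)) + c * V - p / (p - 1) * a powr (p - 1) * G)"
    if "0 < c" for c
    unfolding V_def Q_def G_def k(1)[symmetric]
    using assms a that by (intro integral_max_powr_le_weak_type) auto
  ultimately have "V \<le> Q / ((p - 1) * c powr (p - 1)) + c * V - a powr p * k / (p - 1)" if "0 < c" for c
    using that by fastforce
  then have "V \<le> Q * omega p (a powr p * k / Q) powr p"
    using p a k \<open>a powr p * k \<le> V\<close> unfolding Q_def
    by (intro le_omega_bound) (auto intro: integral_nonneg_AE g_nonneg)
  moreover have "a powr p * k = G powr p / k powr (p - 1)"
  proof -
    have "k powr p = k powr (p - 1) * k"
      using k(2) by (rule powr_diff_one_mult[symmetric])
    then show ?thesis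
      using k G_pos by (simp add: a_def G_def powr_divide)
  qed
  ultimately show ?thesis
    by (simp add: V_def a_def)
qed

lemma nn_integral_powr_le_omega:
  fixes u g :: "'a \<Rightarrow> real"
  assumes "finite_measure N" and k: "measure N (space N) = k" "0 < k"
    and [measurable]: "u \<in> borel_measurable N" "g \<in> borel_measurable N"
    and u_nonneg: "\<And>x. x \<in> space N \<Longrightarrow> 0 \<le> u x" and u_le: "\<And>x. x \<in> space N \<Longrightarrow> u x \<le> B"
    and g_nonneg: "\<And>x. x \<in> space N \<Longrightarrow> 0 \<le> g x" and p: "1 < p"
    and integrable: "integrable N g" "integrable N (\<lambda>x. g x powr p)" and G_pos: "0 < (\<integral>x. g x \<partial>N)"
    and weak: "\<And>l. 0 < l \<Longrightarrow> ennreal l * emeasure N {x\<in>space N. l < u x}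
      \<le> (\<integral>\<^sup>+x\<in>{x\<in>space N. l < u x}. ennreal (g x) \<partial>N)"
  shows "(\<integral>\<^sup>+x. ennreal (u x powr p) \<partial>N) \<le> ennreal ((\<integral>x. g x powr p \<partial>N) *
    omega p ((\<integral>x. g x \<partial>N) powr p / (k powr (p - 1) * (\<integral>x. g x powr p \<partial>N))) powr p)"
proof -
  interpret finite_measure N by fact
  define a where "a = (\<integral>x. g x \<partial>N) / k"
  have "0 < a" using G_pos k by (simp add: a_def)
  have "(\<integral>\<^sup>+x. ennreal (u x powr p) \<partial>N) \<le> (\<integral>\<^sup>+x. ennreal (max (u x) a powr p) \<partial>N)"
    using u_nonneg p by (intro nn_integral_mono ennreal_leI powr_mono2) auto
  also have "\<dots> = ennreal (\<integral>x. max (u x) a powr p \<partial>N)"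
    using u_le \<open>0 < a\<close> p by (intro nn_integral_eq_integral integrable_max_powr) auto
  also have "\<dots> \<le> ennreal ((\<integral>x. g x powr p \<partial>N) *
      omega p ((\<integral>x. g x \<partial>N) powr p / (k powr (p - 1) * (\<integral>x. g x powr p \<partial>N))) powr p)"
    unfolding a_def using assms by (intro ennreal_leI integral_max_mean_powr_le_omega) auto
  finally show ?thesis .
qed

section \<open>The weak-type inequality for the dyadic maximal operator\<close>

lemma tree_level_Suc_children: "tree_level C I (Suc n) = (\<Union>J\<in>C I. tree_level C J n)"
proof (induction n arbitrary: I)
  case (Suc n)
  have "tree_level C I (Suc (Suc n)) = (\<Union>J\<in>tree_level C I (Suc n). C J)" by simp
  also have "\<dots> = (\<Union>J\<in>C I. \<Union>J'\<in>tree_level C J n. C J')" unfolding Suc by blast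
  finally show ?case by simp
qed auto

text \<open>\<open>stopping_set C P n I\<close> is the union of the maximal elements \<open>J\<close> with \<open>P J\<close> among the
  descendants of \<open>I\<close> at most \<open>n\<close> generations below \<open>I\<close>.\<close>

fun stopping_set :: "('a set \<Rightarrow> 'a set set) \<Rightarrow> ('a set \<Rightarrow> bool) \<Rightarrow> nat \<Rightarrow> 'a set \<Rightarrow> 'a set" where
  "stopping_set C P 0 I = (if P I then I else {})"
| "stopping_set C P (Suc n) I = (if P I then I else (\<Union>J\<in>C I. stopping_set C P n J))"

lemma mult_emeasure_le_of_less_avg:
  fixes \<phi> :: "'a \<Rightarrow> real"
  assumes "finite_measure M" and [measurable]: "\<phi> \<in> borel_measurable M" "I \<in> sets M"
    and nonneg: "\<And>x. x \<in> space M \<Longrightarrow> 0 \<le> \<phi> x" and "integrable M \<phi>"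
    and "0 \<le> l" and less: "l < avg M I \<phi>"
  shows "ennreal l * emeasure M I \<le> (\<integral>\<^sup>+x\<in>I. ennreal (\<phi> x) \<partial>M)"
proof -
  interpret finite_measure M by fact
  define S where "S = (\<integral>x\<in>I. \<bar>\<phi> x\<bar> \<partial>M)"
  have "(\<integral>\<^sup>+x\<in>I. ennreal (\<phi> x) \<partial>M) = ennreal S"
    unfolding S_def using nonneg \<open>integrable M \<phi>\<close>
    by (subst nn_set_integral_eq_set_integral[symmetric]) (auto intro!: nn_integral_cong)
  moreover have "measure M I \<noteq> 0"
    using less \<open>0 \<le> l\<close> by (auto simp: avg_def)
  then have "0 < measure M I"
    using measure_nonneg[of M I] by linarith
  with less have "l * measure M I \<le> S"
    by (simp add: avg_def S_def field_simps)
  ultimately show ?thesis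
    using \<open>0 \<le> l\<close> by (simp add: emeasure_eq_measure ennreal_mult[symmetric] ennreal_leI)
qed

locale dyadic_tree =
  fixes M :: "'a measure" and T :: "'a set set" and C :: "'a set \<Rightarrow> 'a set set"
  assumes tree_sets: "T \<subseteq> sets M"
    and children_tree: "\<And>I. I \<in> T \<Longrightarrow> C I \<subseteq> T"
    and children_countable: "\<And>I. I \<in> T \<Longrightarrow> countable (C I)"
    and children_disjoint: "\<And>I. I \<in> T \<Longrightarrow> disjoint (C I)"
    and children_subset: "\<And>I J. I \<in> T \<Longrightarrow> J \<in> C I \<Longrightarrow> J \<subseteq> I"
    and tree_eq_levels: "T = (\<Union>m. tree_level C (space M) m)"
    and space_in_tree: "space M \<in> T"
begin

lemma tree_level_descendants:
  assumes "I \<in> T"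
  shows "tree_level C I n \<subseteq> T \<and> countable (tree_level C I n) \<and> (\<forall>J\<in>tree_level C I n. J \<subseteq> I)"
proof (induction n)
  case (Suc n)
  have "(\<Union>J\<in>tree_level C I n. C J) \<subseteq> T" using Suc children_tree by blast
  moreover have "countable (\<Union>J\<in>tree_level C I n. C J)"
    using Suc children_countable by (intro countable_UN) auto
  moreover have "\<forall>J'\<in>(\<Union>J\<in>tree_level C I n. C J). J' \<subseteq> I"
    using Suc children_subset by blast
  ultimately show ?case by simp
qed (use assms in auto)

lemma countable_tree: "countable T"
  unfolding tree_eq_levels using tree_level_descendants[OF space_in_tree] by (intro countable_UN) auto

lemma stopping_set_subset: "I \<in> T \<Longrightarrow> stopping_set C P n I \<subseteq> I"
proof (induction n arbitrary: I)
  case (Suc n)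
  have "stopping_set C P n J \<subseteq> I" if "J \<in> C I" for J
    using Suc.IH[of J] Suc.prems that children_tree children_subset by blast
  then show ?case by auto
qed simp

lemma stopping_set_sets: "I \<in> T \<Longrightarrow> stopping_set C P n I \<in> sets M"
proof (induction n arbitrary: I)
  case (Suc n)
  have "(\<Union>J\<in>C I. stopping_set C P n J) \<in> sets M"
    using Suc children_tree children_countable by (intro sets.countable_UN') auto
  with Suc.prems tree_sets show ?case by auto
qed (use tree_sets in auto)

lemma stopping_set_witness: "I \<in> T \<Longrightarrow> x \<in> stopping_set C P n I \<Longrightarrow> \<exists>J\<in>T. x \<in> J \<and> P J"
proof (induction n arbitrary: I)
  case (Suc n)
  then show ?case using children_tree by (auto split: if_splits)
qed (auto split: if_splits)

lemma stopping_set_complete: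
  "I \<in> T \<Longrightarrow> J \<in> tree_level C I n \<Longrightarrow> x \<in> J \<Longrightarrow> P J \<Longrightarrow> x \<in> stopping_set C P n I"
proof (induction n arbitrary: I J)
  case (Suc n)
  from Suc.prems(2) obtain J' where J': "J' \<in> C I" "J \<in> tree_level C J' n"
    unfolding tree_level_Suc_children by blast
  then have "J' \<in> T" "J' \<subseteq> I" using Suc.prems(1) children_tree children_subset by auto
  show ?case
  proof (cases "P I")
    case True
    have "J \<subseteq> J'" using tree_level_descendants[OF \<open>J' \<in> T\<close>] J' by blast
    with True Suc.prems \<open>J' \<subseteq> I\<close> show ?thesis by auto
  next
    case False
    with Suc.IH[OF \<open>J' \<in> T\<close> J'(2) Suc.prems(3,4)] J' show ?thesis by auto
  qed
qed simp

lemma stopping_set_mono: "I \<in> T \<Longrightarrow> stopping_set C P n I \<subseteq> stopping_set C P (Suc n) I"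
proof (induction n arbitrary: I)
  case (Suc n)
  have "(\<Union>J\<in>C I. stopping_set C P n J) \<subseteq> (\<Union>J\<in>C I. stopping_set C P (Suc n) J)"
    using Suc.IH Suc.prems children_tree by blast
  then show ?case by auto
qed auto

lemma stopping_set_disjoint_family: "I \<in> T \<Longrightarrow> disjoint_family_on (stopping_set C P n) (C I)"
  unfolding disjoint_family_on_def
proof (intro ballI impI)
  fix J1 J2 assume "I \<in> T" "J1 \<in> C I" "J2 \<in> C I" "J1 \<noteq> J2"
  then have "J1 \<inter> J2 = {}"
    by (intro disjointD[OF children_disjoint[OF \<open>I \<in> T\<close>]])
  moreover have "stopping_set C P n J1 \<subseteq> J1" "stopping_set C P n J2 \<subseteq> J2"
    using children_tree[OF \<open>I \<in> T\<close>] \<open>J1 \<in> C I\<close> \<open>J2 \<in> C I\<close> by (auto intro!: stopping_set_subset)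
  ultimately show "stopping_set C P n J1 \<inter> stopping_set C P n J2 = {}" by blast
qed

lemma emeasure_stopping_set_le:
  fixes \<nu> :: "'a measure" and l :: ennreal
  assumes stop: "\<And>I. I \<in> T \<Longrightarrow> P I \<Longrightarrow> l * emeasure M I \<le> emeasure \<nu> I"
    and sets_eq: "sets \<nu> = sets M"
  shows "I \<in> T \<Longrightarrow> l * emeasure M (stopping_set C P n I) \<le> emeasure \<nu> (stopping_set C P n I)"
proof (induction n arbitrary: I)
  case (Suc n)
  show ?case
  proof (cases "P I")
    case False
    let ?S = "stopping_set C P n"
    have sets: "?S J \<in> sets M" "?S J \<in> sets \<nu>" if "J \<in> C I" for J
      using stopping_set_sets children_tree Suc.prems that sets_eq by blast+
    have "l * emeasure M (\<Union>J\<in>C I. ?S J) = (\<integral>\<^sup>+J. l * emeasure M (?S J) \<partial>count_space (C I))"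
      using sets children_countable[OF Suc.prems] stopping_set_disjoint_family[OF Suc.prems]
      by (simp add: emeasure_UN_countable nn_integral_cmult)
    also have "\<dots> \<le> (\<integral>\<^sup>+J. emeasure \<nu> (?S J) \<partial>count_space (C I))"
      using Suc.IH children_tree Suc.prems by (intro nn_integral_mono) auto
    also have "\<dots> = emeasure \<nu> (\<Union>J\<in>C I. ?S J)"
      using sets children_countable[OF Suc.prems] stopping_set_disjoint_family[OF Suc.prems]
      by (simp add: emeasure_UN_countable)
    finally show ?thesis using False by simp
  qed (use stop Suc.prems in simp)
qed (use stop in simp)

lemma dyadic_max_measurable [measurable]: "dyadic_max M T \<phi> \<in> borel_measurable M"
proof -
  have "dyadic_max M T \<phi> = (\<lambda>x. SUP I\<in>T. ennreal (avg M I \<phi>) * indicator I x)"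
    unfolding dyadic_max_def
    by (intro ext antisym SUP_least) (auto intro: SUP_upper2 SUP_upper simp: indicator_def)
  moreover have "(\<lambda>x. SUP I\<in>T. ennreal (avg M I \<phi>) * indicator I x) \<in> borel_measurable M"
    using countable_tree tree_sets by (intro borel_measurable_SUP) auto
  ultimately show ?thesis by simp
qed

lemma dyadic_max_superlevel_eq_Union:
  assumes "0 \<le> l"
  shows "{x\<in>space M. ennreal l < dyadic_max M T \<phi> x}
    = (\<Union>n. stopping_set C (\<lambda>I. l < avg M I \<phi>) n (space M))" (is "?E = (\<Union>n. ?W n)")
proof (intro set_eqI iffI)
  fix x assume "x \<in> ?E"
  then obtain I where I: "I \<in> T" "x \<in> I" "ennreal l < ennreal (avg M I \<phi>)"
    unfolding dyadic_max_def less_SUP_iff by auto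
  then have "l < avg M I \<phi>" using assms by (simp add: ennreal_less_iff)
  obtain m where "I \<in> tree_level C (space M) m" using I(1) tree_eq_levels by auto
  with I(2) \<open>l < avg M I \<phi>\<close> have "x \<in> ?W m"
    by (intro stopping_set_complete[OF space_in_tree, where P = "\<lambda>I. l < avg M I \<phi>"])
  then show "x \<in> (\<Union>n. ?W n)" by auto
next
  fix x assume "x \<in> (\<Union>n. ?W n)"
  then obtain n where "x \<in> ?W n" by blast
  then obtain J where J: "J \<in> T" "x \<in> J" "l < avg M J \<phi>"
    using stopping_set_witness[OF space_in_tree, where P = "\<lambda>I. l < avg M I \<phi>"] by blast
  have "ennreal l < ennreal (avg M J \<phi>)" using J(3) assms by (simp add: ennreal_less_iff)
  also have "\<dots> \<le> dyadic_max M T \<phi> x" unfolding dyadic_max_def using J by (intro SUP_upper) auto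
  moreover have "x \<in> space M"
    using J(1,2) tree_sets sets.sets_into_space by blast
  ultimately show "x \<in> ?E" by simp
qed

lemma dyadic_max_weak_type:
  fixes \<phi> :: "'a \<Rightarrow> real" and l :: real
  assumes "finite_measure M" and [measurable]: "\<phi> \<in> borel_measurable M"
    and nonneg: "\<And>x. x \<in> space M \<Longrightarrow> 0 \<le> \<phi> x" and "integrable M \<phi>" and "0 \<le> l"
  defines "E \<equiv> {x\<in>space M. ennreal l < dyadic_max M T \<phi> x}"
  shows "ennreal l * emeasure M E \<le> (\<integral>\<^sup>+x\<in>E. ennreal (\<phi> x) \<partial>M)"
proof -
  define P where "P I \<longleftrightarrow> l < avg M I \<phi>" for I
  define \<nu> where "\<nu> = density M (\<lambda>x. ennreal (\<phi> x))"
  define W where "W n = stopping_set C P n (space M)" for n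
  have W_sets: "range W \<subseteq> sets M"
    using stopping_set_sets[OF space_in_tree] by (auto simp: W_def)
  have "incseq W"
    unfolding W_def by (intro incseq_SucI stopping_set_mono space_in_tree)
  have E_eq: "E = (\<Union>n. W n)"
    unfolding E_def W_def P_def using \<open>0 \<le> l\<close> by (rule dyadic_max_superlevel_eq_Union)
  have stop: "ennreal l * emeasure M I \<le> emeasure \<nu> I" if "I \<in> T" "P I" for I
  proof -
    have "I \<in> sets M" using that tree_sets by blast
    have "ennreal l * emeasure M I \<le> (\<integral>\<^sup>+x\<in>I. ennreal (\<phi> x) \<partial>M)"
      using assms \<open>I \<in> sets M\<close> that(2) unfolding P_def by (intro mult_emeasure_le_of_less_avg) auto
    then show ?thesis
      using \<open>I \<in> sets M\<close> by (simp add: \<nu>_def emeasure_density)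
  qed
  have "ennreal l * emeasure M E = ennreal l * (SUP n. emeasure M (W n))"
    unfolding E_eq by (simp add: SUP_emeasure_incseq[OF W_sets \<open>incseq W\<close>])
  also have "\<dots> = (SUP n. ennreal l * emeasure M (W n))"
    by (rule SUP_mult_left_ennreal)
  also have "\<dots> \<le> (SUP n. emeasure \<nu> (W n))"
    unfolding W_def using stop by (intro SUP_mono' emeasure_stopping_set_le space_in_tree) (auto simp: \<nu>_def)
  also have "\<dots> = emeasure \<nu> E"
    unfolding E_eq using W_sets \<open>incseq W\<close> by (intro SUP_emeasure_incseq) (auto simp: \<nu>_def)
  also have "\<dots> = (\<integral>\<^sup>+x\<in>E. ennreal (\<phi> x) \<partial>M)"
    unfolding \<nu>_def E_def by (intro emeasure_density) auto
  finally show ?thesis .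
qed

end

lemma is_tree_imp_dyadic_tree:
  assumes "is_tree M T"
  obtains C where "dyadic_tree M T C"
proof -
  obtain C where C: "\<forall>I\<in>T. C I \<subseteq> T \<and> countable (C I) \<and> (\<exists>J1\<in>C I. \<exists>J2\<in>C I. J1 \<noteq> J2) \<and>
      disjoint (C I) \<and> (\<forall>J\<in>C I. J \<subseteq> I) \<and> \<Union> (C I) = I"
    and "T = (\<Union>m. tree_level C (space M) m)" "T \<subseteq> sets M" "space M \<in> T"
    using assms unfolding is_tree_def by blast
  then have "dyadic_tree M T C"
    by unfold_locales blast+
  then show thesis ..
qed

section \<open>Truncation of the maximal function\<close>

lemma enn2real_min_of_nat_le: "enn2real (min F (of_nat n)) \<le> real n"
  using enn2real_mono[of "min F (of_nat n)" "of_nat n"] by (simp add: of_nat_less_top)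

lemma ennreal_enn2real_min_of_nat_le: "ennreal (enn2real (min F (of_nat n))) \<le> F"
proof -
  have "min F (of_nat n) < \<top>"
    by (intro min.strict_coboundedI2 of_nat_less_top)
  then show ?thesis by simp
qed

lemma ennreal_powr_le_SUP_truncation:
  assumes p: "1 \<le> p"
  shows "ennreal_powr F p \<le> (SUP n. ennreal (enn2real (min F (of_nat n)) powr p))"
proof (cases "F = \<top>")
  case True
  have "\<top> = (SUP n. of_nat n :: ennreal)" by (simp add: ennreal_SUP_of_nat_eq_top)
  also have "\<dots> \<le> (SUP n. ennreal (enn2real (min F (of_nat n)) powr p))"
  proof (intro SUP_mono')
    fix n :: nat
    have "real n \<le> real n powr p"
      using p by (cases "n = 0") (auto intro: order_trans[OF _ powr_mono[of 1 p]])
    then show "of_nat n \<le> ennreal (enn2real (min F (of_nat n)) powr p)"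
      using True by (simp add: ennreal_of_nat_eq_real_of_nat ennreal_leI)
  qed
  finally show ?thesis using True by (simp add: ennreal_powr_def top_unique)
next
  case False
  then obtain r where r: "F = ennreal r" "0 \<le> r" by (cases F) auto
  obtain n where "r \<le> real n" using real_arch_simple by blast
  then have "enn2real (min F (of_nat n)) = r"
    using r by (simp add: min_def ennreal_of_nat_eq_real_of_nat)
  then have "ennreal_powr F p = ennreal (enn2real (min F (of_nat n)) powr p)"
    using r by (simp add: ennreal_powr_def)
  also have "\<dots> \<le> (SUP n. ennreal (enn2real (min F (of_nat n)) powr p))" by (rule SUP_upper) simp
  finally show ?thesis .
qed

lemma set_nn_integral_ennreal_powr_le_SUP_truncation:
  fixes F :: "'a \<Rightarrow> ennreal"
  assumes [measurable]: "F \<in> borel_measurable M" "K \<in> sets M" and p: "1 \<le> p"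
  shows "(\<integral>\<^sup>+x\<in>K. ennreal_powr (F x) p \<partial>M)
    \<le> (SUP n. \<integral>\<^sup>+x. ennreal ((enn2real (min (F x) (of_nat n)) * indicator K x) powr p) \<partial>M)"
proof -
  define h where "h n x = enn2real (min (F x) (of_nat n)) * indicator K x" for n x
  have "incseq (\<lambda>n x. ennreal (h n x powr p))"
  proof (intro incseq_SucI le_funI ennreal_leI powr_mono2)
    fix n x
    have "min (F x) (of_nat n) \<le> min (F x) (of_nat (Suc n))"
      by (intro min.mono) auto
    moreover have "min (F x) (of_nat (Suc n)) < \<top>"
      by (simp add: min.strict_coboundedI2 of_nat_less_top del: of_nat_Suc)
    ultimately have "enn2real (min (F x) (of_nat n)) \<le> enn2real (min (F x) (of_nat (Suc n)))"
      by (rule enn2real_mono)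
    then show "h n x \<le> h (Suc n) x"
      by (simp add: h_def indicator_def)
  qed (use p in \<open>auto simp: h_def\<close>)
  moreover have "ennreal_powr (F x) p * indicator K x \<le> (SUP n. ennreal (h n x powr p))" for x
    using ennreal_powr_le_SUP_truncation[OF p, of "F x"] by (cases "x \<in> K") (simp_all add: h_def)
  ultimately have "(\<integral>\<^sup>+x\<in>K. ennreal_powr (F x) p \<partial>M) \<le> (SUP n. \<integral>\<^sup>+x. ennreal (h n x powr p) \<partial>M)"
    by (subst nn_integral_monotone_convergence_SUP[symmetric]) (auto intro!: nn_integral_mono simp: h_def)
  then show ?thesis by (simp add: h_def)
qed

lemma (in dyadic_tree) nn_integral_truncated_dyadic_max_le:
  fixes \<phi> :: "'a \<Rightarrow> real"
  assumes "finite_measure M" and [measurable]: "\<phi> \<in> borel_measurable M"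
    and nonneg: "\<And>x. x \<in> space M \<Longrightarrow> 0 \<le> \<phi> x"
    and integrable: "integrable M \<phi>" "integrable M (\<lambda>x. \<phi> x powr p)" and pos: "0 < (\<integral>x. \<phi> x \<partial>M)"
    and p: "1 < p" and [measurable]: "K \<in> sets M" and K: "measure M K = k" "0 < k"
  shows "(\<integral>\<^sup>+x. ennreal ((enn2real (min (dyadic_max M T \<phi> x) (of_nat n)) * indicator K x) powr p) \<partial>M)
    \<le> ennreal ((\<integral>t. rearr M \<phi> t powr p \<partial>lborel_upto k) * omega p ((\<integral>t. rearr M \<phi> t \<partial>lborel_upto k) powr p
      / (k powr (p - 1) * (\<integral>t. rearr M \<phi> t powr p \<partial>lborel_upto k))) powr p)"
proof -
  interpret finite_measure M by fact
  interpret \<phi>: rearrangement M \<phi> by standard simp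
  define u where "u x = enn2real (min (dyadic_max M T \<phi> x) (of_nat n)) * indicator K x" for x
  have [measurable]: "u \<in> borel_measurable M" by (simp add: u_def[abs_def])
  interpret u: rearrangement M u by standard simp
  have u_nonneg: "0 \<le> u x" for x by (simp add: u_def)
  have u_le: "u x \<le> n" for x
    using enn2real_min_of_nat_le[of "dyadic_max M T \<phi> x" n] by (simp add: u_def indicator_def)
  have level_subset: "{x\<in>space M. l < u x} \<subseteq> {x\<in>space M. ennreal l < dyadic_max M T \<phi> x}" if "0 < l" for l
  proof safe
    fix x assume "l < u x"
    with that have "l < enn2real (min (dyadic_max M T \<phi> x) (of_nat n))"
      by (cases "x \<in> K") (auto simp: u_def)
    with that have "ennreal l < ennreal (enn2real (min (dyadic_max M T \<phi> x) (of_nat n)))"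
      by (simp add: ennreal_lessI)
    also have "\<dots> \<le> dyadic_max M T \<phi> x"
      by (rule ennreal_enn2real_min_of_nat_le)
    finally show "ennreal l < dyadic_max M T \<phi> x" .
  qed
  have small: "distribution_fun M u s \<le> k" if "0 < s" for s
  proof -
    have "{x\<in>space M. s < u x} \<subseteq> K"
      using that by (auto simp: u_def indicator_def split: if_splits)
    then show ?thesis
      unfolding distribution_fun_def K(1)[symmetric] by (intro finite_measure_mono) auto
  qed
  have "(\<integral>\<^sup>+x. ennreal (u x powr p) \<partial>M) \<le> (\<integral>\<^sup>+t. ennreal (rearr M u t powr p) \<partial>lborel_upto k)"
    using p small by (intro u.nn_integral_powr_le_rearr) (auto simp: u_nonneg)
  also have "\<dots> \<le> ennreal ((\<integral>t. rearr M \<phi> t powr p \<partial>lborel_upto k) * omega p ((\<integral>t. rearr M \<phi> t \<partial>lborel_upto k) powr p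
      / (k powr (p - 1) * (\<integral>t. rearr M \<phi> t powr p \<partial>lborel_upto k))) powr p)"
  proof (rule nn_integral_powr_le_omega[where B = n])
    show "measure (lborel_upto k) (space (lborel_upto k)) = k"
      using K(2) by (simp add: measure_restrict_space)
  next
    fix l :: real assume "0 < l"
    have "ennreal l * emeasure M {x\<in>space M. ennreal l < dyadic_max M T \<phi> x}
        \<le> (\<integral>\<^sup>+x\<in>{x\<in>space M. ennreal l < dyadic_max M T \<phi> x}. ennreal (\<phi> x) \<partial>M)"
      using \<open>0 < l\<close> nonneg integrable finite_measure_axioms by (intro dyadic_max_weak_type) auto
    then show "ennreal l * emeasure (lborel_upto k) {t\<in>space (lborel_upto k). l < rearr M u t}
        \<le> (\<integral>\<^sup>+t\<in>{t\<in>space (lborel_upto k). l < rearr M u t}. ennreal (rearr M \<phi> t) \<partial>lborel_upto k)"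
      using \<open>0 < l\<close> K nonneg level_subset by (intro \<phi>.rearr_weak_type) auto
  qed (use K p nonneg integrable pos in \<open>auto simp: finite_measure_lborel_upto u.rearr_nonneg
      \<phi>.rearr_nonneg u_nonneg u_le intro: u.rearr_le \<phi>.integrable_rearr \<phi>.integrable_rearr_powr
      \<phi>.integral_rearr_pos\<close>)
  finally show ?thesis by (simp add: u_def)
qed

theorem lemma3p2:
  fixes M :: "'a measure" and T :: "'a set set" and \<phi> :: "'a \<Rightarrow> real"
    and p f F k :: real and K :: "'a set"
  assumes "prob_space M" and "non_atomic M" and "is_tree M T"
    and "p > 1"
    and "\<phi> \<in> borel_measurable M" and "\<And>x. x \<in> space M \<Longrightarrow> \<phi> x \<ge> 0"
    and "integrable M \<phi>" and "integrable M (\<lambda>x. \<phi> x powr p)"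
    and "(\<integral>x. \<phi> x \<partial>M) = f" and "(\<integral>x. \<phi> x powr p \<partial>M) = F"
    and "0 < f powr p" and "f powr p \<le> F"
    and "K \<in> sets M" and "measure M K = k" and "0 < k" and "k \<le> 1"
  shows "(\<integral>\<^sup>+x\<in>K. ennreal_powr (dyadic_max M T \<phi> x) p \<partial>M)
    \<le> ennreal ((\<integral>u\<in>{0<..k}. rearr M \<phi> u powr p \<partial>lborel) *
        omega p ((\<integral>u\<in>{0<..k}. rearr M \<phi> u \<partial>lborel) powr p /
                 (k powr (p - 1) * (\<integral>u\<in>{0<..k}. rearr M \<phi> u powr p \<partial>lborel))) powr p)"
proof -
  interpret prob_space M by fact
  obtain C where "dyadic_tree M T C"
    using \<open>is_tree M T\<close> by (rule is_tree_imp_dyadic_tree)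
  then interpret dyadic_tree M T C .
  have "0 \<le> f"
    using assms(6,9) by (auto intro: integral_nonneg_AE)
  with assms(11) have "0 < (\<integral>x. \<phi> x \<partial>M)"
    using assms(9) by (cases "f = 0") auto
  have "(\<integral>\<^sup>+x\<in>K. ennreal_powr (dyadic_max M T \<phi> x) p \<partial>M)
      \<le> (SUP n. \<integral>\<^sup>+x. ennreal ((enn2real (min (dyadic_max M T \<phi> x) (of_nat n)) * indicator K x) powr p) \<partial>M)"
    using assms(4,13) by (intro set_nn_integral_ennreal_powr_le_SUP_truncation) auto
  also have "\<dots> \<le> ennreal ((\<integral>t. rearr M \<phi> t powr p \<partial>lborel_upto k) * omega p ((\<integral>t. rearr M \<phi> t \<partial>lborel_upto k) powr p
      / (k powr (p - 1) * (\<integral>t. rearr M \<phi> t powr p \<partial>lborel_upto k))) powr p)"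
    using assms \<open>0 < (\<integral>x. \<phi> x \<partial>M)\<close> finite_measure_axioms
    by (intro SUP_least nn_integral_truncated_dyadic_max_le) auto
  moreover have "(\<integral>u\<in>{0<..k}. g u \<partial>lborel) = (\<integral>t. g t \<partial>lborel_upto k)" for g :: "real \<Rightarrow> real"
    by (simp add: integral_restrict_space set_lebesgue_integral_def)
  ultimately show ?thesis
    by simp
qed

end
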